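(* $\mathtt{RealTime_{IA}}\subseteq\mathtt{pred}$-$\mathtt{dio}$-$\mathtt{ESO}$-$\mathtt{HORN}$: for every iterative array $\mathcal A$ (sequential input, neighborhood $\{-1,0,1\}$, output on the first cell) there is a predecessor Horn formula with diagonal input-output $\Phi$ such that for all $w\in\Sigma^+$, $\mathcal A$ accepts $w$ in real time iff $\langle w\rangle\models\Phi$.
   Context: Fix a finite alphabet $\Sigma$. A nonempty word $w=w_1\cdots w_n$ is represented by the structure $\langle w\rangle=([1,n];(Q_s)_{s\in\Sigma},\mathtt{min},\mathtt{max},\mathtt{suc},\mathtt{pred})$ with $Q_s(i)\iff w_i=s$, $\mathtt{min}(i)\iff i=1$, $\mathtt{max}(i)\iff i=n$, $\mathtt{suc}(i)=\min(i+1,n)$, $\mathtt{pred}(i)=\max(i-1,1)$; $x-k$ denotes $\mathtt{pred}^k(x)$. A predecessor Horn formula with diagonal input-output is $\Phi=\exists\mathbf{R}\forall x\forall y\,\psi(x,y)$, $\mathbf{R}$ a finite set of binary relation symbols, $\psi$ a conjunction of Horn clauses in $x,y$ over $\{(Q_s)_{s\in\Sigma},\mathtt{min},\mathtt{max},\mathtt{suc},\mathtt{pred},=\}\cup\mathbf{R}$, each of the form $\delta_1\wedge\cdots\wedge\delta_r\to\delta_0$ with $\delta_0$ an atom $R(x,y)$ ($R\in\mathbf{R}$) or $\bot$, each hypothesis being one of: $Q_s(x-a)\wedge x=y$ ($s\in\Sigma$, $a\ge0$); $U(x-a)$, $\neg U(x-a)$, $U(y-a)$, $\neg U(y-a)$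 ($U\in\{\mathtt{min},\mathtt{max}\}$, $a\ge0$); $S(x-a,y-b)$ or $S(y-b,x-a)$ ($S\in\mathbf{R}$, $a,b\ge0$). $\mathtt{pred}$-$\mathtt{dio}$-$\mathtt{ESO}$-$\mathtt{HORN}$ is the class of languages $\{w\in\Sigma^+:\langle w\rangle\models\Phi\}$. An iterative array is a cellular automaton with finite state set $Q\supseteq\Sigma$, accepting states $Q_{accept}\subseteq Q$, neighborhood $\{-1,0,1\}$, transition function $\delta:Q^3\to Q$ and an input transition function $\delta_{input}$ for the first cell. On input $w=w_1\cdots w_n$ it uses cells $1,\dots,n$; cells outside are permanently in a state $\sharp$, cells not yet reached by information are in a quiescent state $\lambda$. The letter $w_i$ is given to cell 1 at time $i$ (state of cell 1 at time $i\le n$ computed by $\delta_{input}$ from $w_i$ and the previous neighbourhood states); other updates are $\langle c,t\rangle=\delta(\langle c-1,t-1\rangle,\langle c,t-1\rangle,\langle c+1,t-1\rangle)$. The array accepts $w$ in real time iff $\langle 1,n\rangle\in Q_{accept}$; $\mathtt{RealTime_{IA}}$ is the class of languages so accepted. *)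

theory Defs
  imports Main
begin

text \<open>The left neighbour of cell 1 is always the border state sharp, so the
  input transition takes the current letter and the (left, own, right)
  neighbourhood states of the previous time step.\<close>

record ('a, 'q) ia =
  ia_delta :: "'q \<Rightarrow> 'q \<Rightarrow> 'q \<Rightarrow> 'q"
  ia_delta_input :: "'a \<Rightarrow> 'q \<Rightarrow> 'q \<Rightarrow> 'q \<Rightarrow> 'q"
  ia_sharp :: 'q
  ia_lambda :: 'q
  ia_accept :: "'q set"

definition is_ia :: "('a, 'q) ia \<Rightarrow> bool" where
  "is_ia A \<longleftrightarrow> ia_delta A (ia_lambda A) (ia_lambda A) (ia_lambda A) = ia_lambda A"

text \<open>Letter w_i (= w ! (i-1)) is read by cell 1 at time i.\<close>
primrec ia_conf :: "('a, 'q) ia \<Rightarrow> 'a list \<Rightarrow> nat \<Rightarrow> nat \<Rightarrow> 'q" where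
  "ia_conf A w 0 = (\<lambda>c. if 1 \<le> c \<and> c \<le> length w then ia_lambda A else ia_sharp A)"
| "ia_conf A w (Suc t) = (\<lambda>c.
     if c = 0 \<or> length w < c then ia_sharp A
     else if c = 1 \<and> Suc t \<le> length w then
       ia_delta_input A (w ! t) (ia_conf A w t 0) (ia_conf A w t 1) (ia_conf A w t 2)
     else ia_delta A (ia_conf A w t (c - 1)) (ia_conf A w t c) (ia_conf A w t (c + 1)))"

definition ia_state :: "('a, 'q) ia \<Rightarrow> 'a list \<Rightarrow> nat \<Rightarrow> nat \<Rightarrow> 'q" where
  "ia_state A w c t = ia_conf A w t c"

definition ia_accepts_rt :: "('a, 'q) ia \<Rightarrow> 'a list \<Rightarrow> bool" where
  "ia_accepts_rt A w \<longleftrightarrow> ia_state A w 1 (length w) \<in> ia_accept A"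

datatype var = VX | VY
datatype unpred = UMin | UMax

text \<open>Hypotheses of a Horn clause; relation symbols are natural numbers.
  HQ s a:           Q_s(x-a) and x = y
  HU U v pos a:     U(v-a) if pos, else not U(v-a), with v in {x,y}
  HRxy S a b:       S(x-a, y-b)
  HRyx S b a:       S(y-b, x-a)\<close>
datatype 'a hyp =
    HQ 'a nat
  | HU unpred var bool nat
  | HRxy nat nat nat
  | HRyx nat nat nat

text \<open>A clause: list of hypotheses and head (Some S = S(x,y), None = bottom).
  A formula is the list of clauses of psi; its relation symbols
  (the finite set R) are those occurring in it.\<close>
type_synonym 'a clause = "'a hyp list \<times> nat option"
type_synonym 'a pdio_formula = "'a clause list"

definition wpred :: "nat \<Rightarrow> nat" where
  "wpred i = max (i - 1) 1"

text \<open>x - k = pred^k(x)\<close>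
definition wpredk :: "nat \<Rightarrow> nat \<Rightarrow> nat" where
  "wpredk k x = (wpred ^^ k) x"

definition wQ :: "'a list \<Rightarrow> 'a \<Rightarrow> nat \<Rightarrow> bool" where
  "wQ w s i \<longleftrightarrow> w ! (i - 1) = s"

definition wU :: "'a list \<Rightarrow> unpred \<Rightarrow> nat \<Rightarrow> bool" where
  "wU w U i \<longleftrightarrow> (case U of UMin \<Rightarrow> i = 1 | UMax \<Rightarrow> i = length w)"

fun hyp_sem :: "'a list \<Rightarrow> (nat \<Rightarrow> nat \<Rightarrow> nat \<Rightarrow> bool) \<Rightarrow> nat \<Rightarrow> nat \<Rightarrow> 'a hyp \<Rightarrow> bool" where
  "hyp_sem w I x y (HQ s a) \<longleftrightarrow> wQ w s (wpredk a x) \<and> x = y"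
| "hyp_sem w I x y (HU U v pos a) \<longleftrightarrow>
     (wU w U (wpredk a (case v of VX \<Rightarrow> x | VY \<Rightarrow> y)) \<longleftrightarrow> pos)"
| "hyp_sem w I x y (HRxy S a b) \<longleftrightarrow> I S (wpredk a x) (wpredk b y)"
| "hyp_sem w I x y (HRyx S b a) \<longleftrightarrow> I S (wpredk b y) (wpredk a x)"

definition clause_sem :: "'a list \<Rightarrow> (nat \<Rightarrow> nat \<Rightarrow> nat \<Rightarrow> bool) \<Rightarrow> nat \<Rightarrow> nat \<Rightarrow> 'a clause \<Rightarrow> bool" where
  "clause_sem w I x y C \<longleftrightarrow>
     ((\<forall>h \<in> set (fst C). hyp_sem w I x y h) \<longrightarrow>
      (case snd C of None \<Rightarrow> False | Some S \<Rightarrow> I S x y))"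

definition models :: "'a list \<Rightarrow> 'a pdio_formula \<Rightarrow> bool" where
  "models w \<Phi> \<longleftrightarrow>
     (\<exists>I :: nat \<Rightarrow> nat \<Rightarrow> nat \<Rightarrow> bool.
        \<forall>x \<in> {1..length w}. \<forall>y \<in> {1..length w}. \<forall>C \<in> set \<Phi>. clause_sem w I x y C)"

end

theory Submission
  imports Defs "HOL-Library.Countable"
begin

text \<open>The space-time diagram of the run is written into binary relations, sheared so
  that every transition becomes a Horn clause using predecessors only: relation symbol 0
  is the strict order \<open>x < y\<close>, and the symbol of state \<open>q\<close> holds at \<open>(t, y)\<close>, \<open>t \<le> y\<close>,
  iff cell \<open>y - t + 1\<close> is in state \<open>q\<close> at time \<open>t\<close>. The three neighbours of cell \<open>c\<close> at
  time \<open>t + 1\<close> then sit at \<open>(t, y - 2)\<close>, \<open>(t, y - 1)\<close>, \<open>(t, y)\<close>, and cell 1 reads its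
  letter on the diagonal \<open>x = y\<close>. Only the cells \<open>c \<le> n - t + 1\<close> are represented,
  which is exactly the light cone of cell 1 at time \<open>n\<close>. The intended interpretation
  satisfies the clauses, and every model contains it by induction on time; acceptance
  is then the absence of a rejecting state at \<open>(n, n)\<close>.\<close>

lemma wpred_Suc [simp]: "0 < t \<Longrightarrow> wpred (Suc t) = t"
  by (simp add: wpred_def)

lemma wpredk_0 [simp]: "wpredk 0 x = x"
  and wpredk_1 [simp]: "wpredk (Suc 0) x = wpred x"
  and wpredk_2 [simp]: "wpredk 2 x = wpred (wpred x)"
  by (simp_all add: wpredk_def numeral_2_eq_2)

lemma ia_conf_border: "ia_conf A w t 0 = ia_sharp A"
  by (cases t) auto

lemma ia_conf_1:
  assumes "1 \<le> c" "c \<le> length w"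
  shows "ia_conf A w (Suc 0) c =
    (let r = if c = length w then ia_sharp A else ia_lambda A in
     if c = Suc 0 then ia_delta_input A (w ! 0) (ia_sharp A) (ia_lambda A) r
     else ia_delta A (ia_lambda A) (ia_lambda A) r)"
  using assms by (auto simp: Let_def)

lemma ia_conf_Suc_first:
  "Suc t \<le> length w \<Longrightarrow> ia_conf A w (Suc t) (Suc 0) =
     ia_delta_input A (w ! t) (ia_sharp A) (ia_conf A w t (Suc 0)) (ia_conf A w t (Suc (Suc 0)))"
  by (cases w) (auto simp: ia_conf_border numeral_2_eq_2)

lemma ia_conf_Suc_inner:
  "2 \<le> c \<Longrightarrow> c \<le> length w \<Longrightarrow> ia_conf A w (Suc t) c =
     ia_delta A (ia_conf A w t (c - 1)) (ia_conf A w t c) (ia_conf A w t (c + 1))"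
  by simp

declare ia_conf.simps(2) [simp del]

definition state_sym :: "'q::countable \<Rightarrow> nat" where
  "state_sym q = Suc (to_nat q)"

lemma state_sym_eq_iff [simp]: "state_sym p = state_sym q \<longleftrightarrow> p = q"
  by (simp add: state_sym_def)

lemma state_sym_nonzero [simp]: "state_sym q \<noteq> 0"
  by (simp add: state_sym_def)

definition order_clauses :: "'a clause set" where
  "order_clauses = {([HU UMin VX True 0, HU UMin VY False 0], Some 0),
                    ([HU UMin VX False 0, HRxy 0 1 1], Some 0)}"

definition time1_clauses :: "('a, 'q::countable) ia \<Rightarrow> 'a clause set" where
  "time1_clauses A =
     range (\<lambda>(s, last). ([HU UMin VX True 0, HQ s 0, HU UMax VY last 0],
       Some (state_sym (ia_delta_input A s (ia_sharp A) (ia_lambda A)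
         (if last then ia_sharp A else ia_lambda A)))))
   \<union> range (\<lambda>last. ([HU UMin VX True 0, HU UMin VY False 0, HU UMax VY last 0],
       Some (state_sym (ia_delta A (ia_lambda A) (ia_lambda A)
         (if last then ia_sharp A else ia_lambda A)))))"

definition first_cell_clauses :: "('a, 'q::countable) ia \<Rightarrow> 'a clause set" where
  "first_cell_clauses A =
     range (\<lambda>(s, q2, q3). ([HQ s 0, HU UMin VX False 0,
         HRxy (state_sym q2) 1 1, HRxy (state_sym q3) 1 0],
       Some (state_sym (ia_delta_input A s (ia_sharp A) q2 q3))))"

definition inner_cell_clauses :: "('a, 'q::countable) ia \<Rightarrow> 'a clause set" where
  "inner_cell_clauses A =
     range (\<lambda>(q1, q2, q3). ([HU UMin VX False 0, HRxy 0 0 0,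
         HRxy (state_sym q1) 1 2, HRxy (state_sym q2) 1 1, HRxy (state_sym q3) 1 0],
       Some (state_sym (ia_delta A q1 q2 q3))))"

definition reject_clauses :: "('a, 'q::countable) ia \<Rightarrow> 'a clause set" where
  "reject_clauses A =
     (\<lambda>q. ([HU UMax VX True 0, HU UMax VY True 0, HRxy (state_sym q) 0 0], None)) ` (- ia_accept A)"

definition ia_clauses :: "('a, 'q::countable) ia \<Rightarrow> 'a clause set" where
  "ia_clauses A = order_clauses \<union> time1_clauses A \<union> first_cell_clauses A
     \<union> inner_cell_clauses A \<union> reject_clauses A"

lemma finite_ia_clauses: "finite (ia_clauses (A :: ('a::finite, 'q::finite) ia))"
  by (simp add: ia_clauses_def order_clauses_def time1_clauses_def first_cell_clauses_def
      inner_cell_clauses_def reject_clauses_def)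

definition satisfies :: "'a list \<Rightarrow> (nat \<Rightarrow> nat \<Rightarrow> nat \<Rightarrow> bool) \<Rightarrow> 'a clause set \<Rightarrow> bool" where
  "satisfies w I CS \<longleftrightarrow> (\<forall>x \<in> {1..length w}. \<forall>y \<in> {1..length w}. \<forall>C \<in> CS. clause_sem w I x y C)"

lemma models_iff_satisfies: "models w \<Phi> \<longleftrightarrow> (\<exists>I. satisfies w I (set \<Phi>))"
  by (simp add: models_def satisfies_def)

lemma satisfies_Un [simp]: "satisfies w I (CS \<union> DS) \<longleftrightarrow> satisfies w I CS \<and> satisfies w I DS"
  by (auto simp: satisfies_def)

lemma satisfies_fire:
  assumes "satisfies w I CS" "(hs, Some S) \<in> CS"
    and "x \<in> {1..length w}" "y \<in> {1..length w}" "\<forall>h \<in> set hs. hyp_sem w I x y h"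
  shows "I S x y"
  using assms by (fastforce simp: satisfies_def clause_sem_def)

lemma satisfies_refute:
  assumes "satisfies w I CS" "(hs, None) \<in> CS"
    and "x \<in> {1..length w}" "y \<in> {1..length w}" "\<forall>h \<in> set hs. hyp_sem w I x y h"
  shows False
  using assms by (fastforce simp: satisfies_def clause_sem_def)

definition run_interp :: "('a, 'q::countable) ia \<Rightarrow> 'a list \<Rightarrow> nat \<Rightarrow> nat \<Rightarrow> nat \<Rightarrow> bool" where
  "run_interp A w S t y \<longleftrightarrow>
     (if S = 0 then t < y else t \<le> y \<and> S = state_sym (ia_conf A w t (y - t + 1)))"

lemma run_interp_state_sym [simp]:
  "run_interp A w (state_sym q) t y \<longleftrightarrow> t \<le> y \<and> q = ia_conf A w t (y - t + 1)"
  by (auto simp: run_interp_def)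

lemma run_interp_0 [simp]: "run_interp A w 0 t y \<longleftrightarrow> t < y"
  by (simp add: run_interp_def)

lemma satisfies_order_clauses: "satisfies w (run_interp A w) order_clauses"
  by (auto simp: satisfies_def order_clauses_def clause_sem_def wU_def wpred_def)

lemma satisfies_time1_clauses: "satisfies w (run_interp A w) (time1_clauses A)"
  by (auto simp: satisfies_def time1_clauses_def clause_sem_def wU_def wQ_def ia_conf_1)

lemma satisfies_first_cell_clauses: "satisfies w (run_interp A w) (first_cell_clauses A)"
  unfolding satisfies_def first_cell_clauses_def clause_sem_def
  apply (clarsimp simp: wU_def wQ_def)
  subgoal for x by (cases x) (simp_all add: ia_conf_Suc_first)
  done

lemma satisfies_inner_cell_clauses: "satisfies w (run_interp A w) (inner_cell_clauses A)"
  unfolding satisfies_def inner_cell_clauses_def clause_sem_def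
  apply (clarsimp simp: wU_def)
  subgoal for x y
  proof -
    assume "Suc 0 \<le> x" "x \<noteq> Suc 0" "x < y" "y \<le> length w"
    then obtain t d where "x = Suc t" "0 < t" "y = Suc (Suc (t + d))"
      by (cases x) (auto dest!: less_imp_Suc_add)
    with \<open>y \<le> length w\<close> show ?thesis
      by (simp add: ia_conf_Suc_inner)
  qed
  done

lemma satisfies_reject_clauses:
  "ia_accepts_rt A w \<Longrightarrow> satisfies w (run_interp A w) (reject_clauses A)"
  by (auto simp: satisfies_def reject_clauses_def clause_sem_def wU_def ia_accepts_rt_def ia_state_def)

lemma satisfies_run_interp:
  "ia_accepts_rt A w \<Longrightarrow> satisfies w (run_interp A w) (ia_clauses A)"
  by (simp add: ia_clauses_def satisfies_order_clauses satisfies_time1_clauses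
      satisfies_first_cell_clauses satisfies_inner_cell_clauses satisfies_reject_clauses)

lemma order_clauses_less:
  assumes "satisfies w I order_clauses"
  shows "0 < x \<Longrightarrow> x < y \<Longrightarrow> y \<le> length w \<Longrightarrow> I 0 x y"
proof (induction x arbitrary: y rule: nat_induct_non_zero)
  case 1
  then show ?case
    by (intro satisfies_fire[OF assms, of "[HU UMin VX True 0, HU UMin VY False 0]"])
      (auto simp: order_clauses_def wU_def)
next
  case (Suc x)
  then have "I 0 x (y - 1)" by simp
  with Suc show ?case
    by (intro satisfies_fire[OF assms, of "[HU UMin VX False 0, HRxy 0 1 1]"])
      (auto simp: order_clauses_def wU_def wpred_def)
qed

lemma time1_clauses_fire:
  assumes "satisfies w I (time1_clauses A)" "y \<in> {1..length w}"
  shows "I (state_sym (ia_conf A w (Suc 0) y)) 1 y"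
proof (cases "y = 1")
  case True
  with assms show ?thesis
    by (intro satisfies_fire[OF assms(1),
          of "[HU UMin VX True 0, HQ (w ! 0) 0, HU UMax VY (y = length w) 0]"])
      (auto simp: time1_clauses_def wU_def wQ_def ia_conf_1
        intro: range_eqI[of _ _ "(w ! 0, y = length w)"])
next
  case False
  with assms show ?thesis
    by (intro satisfies_fire[OF assms(1),
          of "[HU UMin VX True 0, HU UMin VY False 0, HU UMax VY (y = length w) 0]"])
      (auto simp: time1_clauses_def wU_def ia_conf_1 intro: range_eqI[of _ _ "y = length w"])
qed

lemma first_cell_clauses_fire:
  assumes "satisfies w I (first_cell_clauses A)" "0 < t" "Suc t \<le> length w"
    and "I (state_sym q2) t t" "I (state_sym q3) t (Suc t)"
  shows "I (state_sym (ia_delta_input A (w ! t) (ia_sharp A) q2 q3)) (Suc t) (Suc t)"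
  using assms
  by (intro satisfies_fire[OF assms(1), of "[HQ (w ! t) 0, HU UMin VX False 0,
        HRxy (state_sym q2) 1 1, HRxy (state_sym q3) 1 0]"])
    (auto simp: first_cell_clauses_def wU_def wQ_def intro: range_eqI[of _ _ "(w ! t, q2, q3)"])

lemma inner_cell_clauses_fire:
  assumes "satisfies w I (inner_cell_clauses A)" "0 < t" "y = Suc (Suc (t + d))" "y \<le> length w"
    and "I 0 (Suc t) y"
    and "I (state_sym q1) t (t + d)" "I (state_sym q2) t (Suc (t + d))" "I (state_sym q3) t y"
  shows "I (state_sym (ia_delta A q1 q2 q3)) (Suc t) y"
  using assms
  by (intro satisfies_fire[OF assms(1), of "[HU UMin VX False 0, HRxy 0 0 0,
        HRxy (state_sym q1) 1 2, HRxy (state_sym q2) 1 1, HRxy (state_sym q3) 1 0]"])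
    (auto simp: inner_cell_clauses_def wU_def intro: range_eqI[of _ _ "(q1, q2, q3)"])

lemma satisfies_contains_run:
  assumes order: "satisfies w I order_clauses"
    and time1: "satisfies w I (time1_clauses A)"
    and first: "satisfies w I (first_cell_clauses A)"
    and inner: "satisfies w I (inner_cell_clauses A)"
  shows "0 < t \<Longrightarrow> t \<le> y \<Longrightarrow> y \<le> length w \<Longrightarrow>
    I (state_sym (ia_conf A w t (y - t + 1))) t y"
proof (induction t arbitrary: y rule: nat_induct_non_zero)
    case 1
    then show ?case using time1_clauses_fire[OF time1, of y] by simp
  next
    case (Suc t)
    show ?case
    proof (cases "y = Suc t")
      case True
      have "I (state_sym (ia_conf A w t (Suc 0))) t t"
        and "I (state_sym (ia_conf A w t (Suc (Suc 0)))) t (Suc t)"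
        using Suc.IH[of t] Suc.IH[of "Suc t"] Suc True by (simp_all add: Suc_diff_le)
      from first_cell_clauses_fire[OF first \<open>0 < t\<close> _ this] Suc.prems True
      show ?thesis by (simp add: ia_conf_Suc_first)
    next
      case False
      with Suc.prems obtain d where y: "y = Suc (Suc (t + d))"
        by (auto dest!: le_imp_less_or_eq less_imp_Suc_add)
      have "I 0 (Suc t) y"
        using order_clauses_less[OF order, of "Suc t" y] Suc.prems y by simp
      moreover have "I (state_sym (ia_conf A w t (Suc d))) t (t + d)"
        and "I (state_sym (ia_conf A w t (Suc (Suc d)))) t (Suc (t + d))"
        and "I (state_sym (ia_conf A w t (Suc (Suc (Suc d))))) t y"
        using Suc.IH[of "t + d"] Suc.IH[of "Suc (t + d)"] Suc.IH[of y] Suc y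
        by (simp_all add: Suc_diff_le)
      ultimately show ?thesis
        using inner_cell_clauses_fire[OF inner \<open>0 < t\<close> y] Suc.prems y
        by (simp add: ia_conf_Suc_inner)
    qed
qed

lemma reject_clauses_accepts:
  assumes "satisfies w I (reject_clauses A)" "w \<noteq> []"
    and "I (state_sym (ia_conf A w (length w) (Suc 0))) (length w) (length w)"
  shows "ia_accepts_rt A w"
proof (rule ccontr)
  assume "\<not> ia_accepts_rt A w"
  with assms show False
    by (intro satisfies_refute[OF assms(1), of "[HU UMax VX True 0, HU UMax VY True 0,
          HRxy (state_sym (ia_conf A w (length w) (Suc 0))) 0 0]" "length w" "length w"])
      (auto simp: reject_clauses_def wU_def ia_accepts_rt_def ia_state_def Suc_le_eq)
qed

theorem lemma5:
  fixes A :: "('a::finite, 'q::finite) ia"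
  assumes "is_ia A"
  shows "\<exists>\<Phi> :: 'a pdio_formula. \<forall>w :: 'a list. w \<noteq> [] \<longrightarrow>
           (ia_accepts_rt A w \<longleftrightarrow> models w \<Phi>)"
proof -
  obtain \<Phi> :: "'a pdio_formula" where \<Phi>: "set \<Phi> = ia_clauses A"
    using finite_list[OF finite_ia_clauses] by blast
  have "ia_accepts_rt A w \<longleftrightarrow> models w \<Phi>" if "w \<noteq> []" for w
  proof
    assume "ia_accepts_rt A w"
    then show "models w \<Phi>"
      using satisfies_run_interp models_iff_satisfies \<Phi> by metis
  next
    assume "models w \<Phi>"
    then obtain I where "satisfies w I (ia_clauses A)"
      using models_iff_satisfies \<Phi> by metis
    then show "ia_accepts_rt A w"
      using satisfies_contains_run[of w I A "length w" "length w"]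
        reject_clauses_accepts[of w I A] \<open>w \<noteq> []\<close>
      by (simp add: ia_clauses_def)
  qed
  then show ?thesis by blast
qed

end
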